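(* Let $A$ be an archimedean $*$-algebra, $x\in A$ with $x=x^*$, and $\bar x$ its image in $C^*(A)$. Then $\bar x\geq0$ in $C^*(A)$ if and only if $x+\alpha\in A_+$ for every positive rational $\alpha$.
   Context: A $*$-algebra is a unital algebra over $\mathbb{Q}$ with a $\mathbb{Q}$-linear involution $x\mapsto x^*$ satisfying $(xy)^*=y^*x^*$; rational scalars are identified with multiples of the unit. $A_+=\{\sum_{i=1}^n x_i^*x_i: n\in\mathbb{N},x_i\in A\}$, and $x\leq y$ means $y-x\in A_+$. For $x\in A$, $\|x\|=\sqrt{\inf\{\alpha\in\mathbb{Q}_{>0}: x^*x\leq\alpha\}}\in[0,\infty]$; $A_i=\{x:\|x\|=0\}$. $A$ is archimedean if $-1\notin A_+$ and $\|x\|<\infty$ for all $x$. $C^*(A)=\mathbb{C}\otimes_{\mathbb{R}}C^*_{\mathbb{R}}(A)$, where $C^*_{\mathbb{R}}(A)$ is the completion of $A/A_i$ with respect to the norm induced by $\|\cdot\|$. *)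

theory Defs
  imports Complex_Main "HOL-Library.Extended_Real"
begin

class rat_algebra = ring_1 +
  fixes scaleQ :: "rat \<Rightarrow> 'a \<Rightarrow> 'a"
  assumes scaleQ_add_left: "scaleQ (a + b) x = scaleQ a x + scaleQ b x"
    and scaleQ_add_right: "scaleQ a (x + y) = scaleQ a x + scaleQ a y"
    and scaleQ_scaleQ: "scaleQ a (scaleQ b x) = scaleQ (a * b) x"
    and scaleQ_one: "scaleQ 1 x = x"
    and scaleQ_mult_left: "scaleQ a (x * y) = scaleQ a x * y"
    and scaleQ_mult_right: "scaleQ a (x * y) = x * scaleQ a y"

class star_algebra = rat_algebra +
  fixes invol :: "'a \<Rightarrow> 'a"
  assumes invol_add: "invol (x + y) = invol x + invol y"
    and invol_scaleQ: "invol (scaleQ a x) = scaleQ a (invol x)"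
    and invol_invol: "invol (invol x) = x"
    and invol_mult: "invol (x * y) = invol y * invol x"

definition ratA :: "rat \<Rightarrow> 'a::star_algebra" where
  "ratA q = scaleQ q 1"

definition posCone :: "'a::star_algebra set" where
  "posCone = {z. \<exists>xs::'a list. z = sum_list (map (\<lambda>y. invol y * y) xs)}"

definition sle :: "'a::star_algebra \<Rightarrow> 'a \<Rightarrow> bool" where
  "sle x y \<longleftrightarrow> y - x \<in> posCone"

definition bound_set :: "'a::star_algebra \<Rightarrow> rat set" where
  "bound_set x = {\<alpha>. \<alpha> > 0 \<and> sle (invol x * x) (ratA \<alpha>)}"

definition anorm :: "'a::star_algebra \<Rightarrow> ereal" where
  "anorm x = (if bound_set x = {} then \<infinity>
              else ereal (sqrt (Inf (real_of_rat ` bound_set x))))"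

definition archimedean_star :: "'a::star_algebra itself \<Rightarrow> bool" where
  "archimedean_star _ \<longleftrightarrow> (- 1 :: 'a) \<notin> posCone \<and> (\<forall>x::'a. anorm x < \<infinity>)"

text \<open>Cauchy sequences in A for the seminorm; they represent the points of the
  completion C*_R(A) of A/A_i.\<close>
definition acauchy :: "(nat \<Rightarrow> 'a::star_algebra) \<Rightarrow> bool" where
  "acauchy u \<longleftrightarrow> (\<forall>e>0. \<exists>N. \<forall>m\<ge>N. \<forall>n\<ge>N. anorm (u m - u n) < ereal e)"

text \<open>Points of C*(A) = C \<otimes>_R C*_R(A), represented as (real part, imaginary part),
  each a Cauchy sequence in A.\<close>
type_synonym 'a cs = "(nat \<Rightarrow> 'a) \<times> (nat \<Rightarrow> 'a)"

definition cs_valid :: "'a::star_algebra cs \<Rightarrow> bool" where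
  "cs_valid z \<longleftrightarrow> acauchy (fst z) \<and> acauchy (snd z)"

definition cs_eq :: "'a::star_algebra cs \<Rightarrow> 'a cs \<Rightarrow> bool" where
  "cs_eq z w \<longleftrightarrow> ((\<lambda>n. anorm (fst z n - fst w n)) \<longlonglongrightarrow> 0)
                 \<and> ((\<lambda>n. anorm (snd z n - snd w n)) \<longlonglongrightarrow> 0)"

text \<open>Product (a + ib)(c + id) = (ac - bd) + i(ad + bc), extended by continuity.\<close>
definition cs_mult :: "'a::star_algebra cs \<Rightarrow> 'a cs \<Rightarrow> 'a cs" where
  "cs_mult z w = ((\<lambda>n. fst z n * fst w n - snd z n * snd w n),
                  (\<lambda>n. fst z n * snd w n + snd z n * fst w n))"

definition cs_star :: "'a::star_algebra cs \<Rightarrow> 'a cs" where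
  "cs_star z = ((\<lambda>n. invol (fst z n)), (\<lambda>n. - invol (snd z n)))"

definition cs_of :: "'a::star_algebra \<Rightarrow> 'a cs" where
  "cs_of x = ((\<lambda>_. x), (\<lambda>_. 0))"

definition cs_pos :: "'a::star_algebra cs \<Rightarrow> bool" where
  "cs_pos z \<longleftrightarrow> (\<exists>y. cs_valid y \<and> cs_eq z (cs_mult (cs_star y) y))"

end

theory Submission
  imports Defs "HOL-Computational_Algebra.Formal_Power_Series"
begin

text \<open>Everything rests on the fact that for hermitian \<open>u\<close> and rational \<open>m > 0\<close> one has
  \<open>-m \<le> u \<le> m\<close> iff \<open>u\<^sup>*u \<le> m\<^sup>2\<close>, so that seminorm estimates become order estimates in \<open>A\<close>.

  If \<open>x\<close> is approximated in the seminorm by sums of hermitian squares \<open>p\<close>, then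
  \<open>\<parallel>x - p\<parallel> < \<alpha>\<close> gives \<open>x + \<alpha> \<ge> p \<ge> 0\<close>.

  Conversely, let \<open>x + \<alpha> \<in> A\<^sub>+\<close> for all \<open>\<alpha> > 0\<close> and \<open>-K \<le> x \<le> K\<close> with \<open>K \<ge> 1\<close>. Then
  \<open>v = x/K\<^sup>2 - 1\<close> satisfies \<open>-1-\<alpha> \<le> v \<le> 1+\<alpha>\<close> for all \<open>\<alpha> > 0\<close>, so the partial sums \<open>s\<^sub>N\<close> of the
  binomial series of \<open>\<surd>(1 + v)\<close> are controlled in the order of \<open>A\<close> by the convergent series
  \<open>\<Sum> |1/2 choose k| = 2\<close>: they form a Cauchy sequence with \<open>s\<^sub>N\<^sup>2 \<rightarrow> 1 + v\<close>. Hence \<open>K s\<^sub>N\<close>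
  represents a hermitian square root of \<open>x\<close> in \<open>C\<^sup>*(A)\<close>.\<close>

section \<open>Arithmetic in \<open>*\<close>-algebras\<close>

lemma scaleQ_0_left [simp]: "scaleQ 0 (x::'a::star_algebra) = 0"
  using scaleQ_add_left[of 0 0 x] by simp

lemma scaleQ_0_right [simp]: "scaleQ a (0::'a::star_algebra) = 0"
  using scaleQ_add_right[of a 0 0] by simp

lemma scaleQ_minus_right: "scaleQ a (- x) = - scaleQ a (x::'a::star_algebra)"
  using scaleQ_add_right[of a x "-x"] minus_unique[of "scaleQ a x"] by simp

lemma scaleQ_diff_right: "scaleQ a (x - y) = scaleQ a x - scaleQ a (y::'a::star_algebra)"
  using scaleQ_add_right[of a x "-y"] by (simp add: scaleQ_minus_right)

lemma scaleQ_minus_left: "scaleQ (- a) x = - scaleQ a (x::'a::star_algebra)"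
  using scaleQ_add_left[of a "-a" x] minus_unique[of "scaleQ a x"] by simp

lemma scaleQ_diff_left: "scaleQ (a - b) x = scaleQ a x - scaleQ b (x::'a::star_algebra)"
  using scaleQ_add_left[of a "-b" x] by (simp add: scaleQ_minus_left)

lemma scaleQ_sum_left: "scaleQ (sum f S) (x::'a::star_algebra) = (\<Sum>i\<in>S. scaleQ (f i) x)"
  by (induction S rule: infinite_finite_induct) (auto simp: scaleQ_add_left)

lemma mult_scaleQ_left: "scaleQ a x * y = scaleQ a (x * (y::'a::star_algebra))"
  by (simp add: scaleQ_mult_left)

lemma mult_scaleQ_right: "x * scaleQ a y = scaleQ a (x * (y::'a::star_algebra))"
  by (simp add: scaleQ_mult_right)

lemma invol_0 [simp]: "invol (0::'a::star_algebra) = 0"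
  using invol_add[of "0::'a" 0] by simp

lemma invol_minus: "invol (- x) = - invol (x::'a::star_algebra)"
  using invol_add[of x "-x"] minus_unique[of "invol x"] by simp

lemma invol_diff: "invol (x - y) = invol x - invol (y::'a::star_algebra)"
  using invol_add[of x "-y"] by (simp add: invol_minus)

lemma invol_1 [simp]: "invol (1::'a::star_algebra) = 1"
  using invol_mult[of "invol (1::'a)" 1] by (simp add: invol_invol)

lemma invol_sum: "invol (sum f S) = (\<Sum>i\<in>S. invol (f i::'a::star_algebra))"
  by (induction S rule: infinite_finite_induct) (auto simp: invol_add)

lemma ratA_1 [simp]: "ratA 1 = 1"
  by (simp add: ratA_def scaleQ_one)

lemma ratA_add: "ratA (a + b) = ratA a + ratA b"
  by (simp add: ratA_def scaleQ_add_left)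

lemma ratA_diff: "ratA (a - b) = ratA a - ratA b"
  by (simp add: ratA_def scaleQ_diff_left)

lemma ratA_mult_left: "ratA a * x = scaleQ a x"
  by (simp add: ratA_def mult_scaleQ_left scaleQ_one)

lemma ratA_mult_right: "x * ratA a = scaleQ a x"
  by (simp add: ratA_def mult_scaleQ_right scaleQ_one)

lemma scaleQ_ratA: "scaleQ a (ratA b) = ratA (a * b)"
  by (simp add: ratA_def scaleQ_scaleQ)

lemma ratA_mult: "ratA a * ratA b = ratA (a * b)"
  by (simp add: ratA_mult_left scaleQ_ratA)

lemma invol_ratA [simp]: "invol (ratA a) = ratA a"
  by (simp add: ratA_def invol_scaleQ)

lemma ratA_commute: "ratA a * x = x * ratA a"
  by (simp add: ratA_mult_left ratA_mult_right)

lemma ratA_double: "ratA a + ratA a = ratA (2 * a)"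
  by (simp add: ratA_add[symmetric])

abbreviation hermitian :: "'a::star_algebra \<Rightarrow> bool" where
  "hermitian z \<equiv> invol z = z"

lemma hermitian_add: "hermitian a \<Longrightarrow> hermitian b \<Longrightarrow> hermitian (a + b)"
  by (simp add: invol_add)

lemma hermitian_diff: "hermitian a \<Longrightarrow> hermitian b \<Longrightarrow> hermitian (a - b)"
  by (simp add: invol_diff)

lemma hermitian_scaleQ: "hermitian a \<Longrightarrow> hermitian (scaleQ q a)"
  by (simp add: invol_scaleQ)

lemma hermitian_mult: "hermitian a \<Longrightarrow> hermitian b \<Longrightarrow> a * b = b * a \<Longrightarrow> hermitian (a * b)"
  by (simp add: invol_mult)

lemma hermitian_power: "hermitian a \<Longrightarrow> hermitian (a ^ n)"
  by (induction n) (simp_all add: invol_mult power_commutes)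

lemma hermitian_sum: "(\<And>i. i \<in> S \<Longrightarrow> hermitian (f i)) \<Longrightarrow> hermitian (sum f S)"
  by (simp add: invol_sum)

lemma hermitian_square: "hermitian (invol a * a)"
  by (simp add: invol_mult invol_invol)

lemma posCone_0 [simp]: "0 \<in> posCone"
  unfolding posCone_def by (auto intro!: exI[of _ "[]"])

lemma posCone_add:
  assumes "p \<in> posCone" "q \<in> posCone"
  shows "p + q \<in> posCone"
proof -
  obtain xs ys where "p = sum_list (map (\<lambda>y. invol y * y) xs)"
    and "q = sum_list (map (\<lambda>y. invol y * y) ys)"
    using assms by (auto simp: posCone_def)
  then have "p + q = sum_list (map (\<lambda>y. invol y * y) (xs @ ys))"
    by simp
  then show ?thesis
    unfolding posCone_def by blast
qed

lemma posCone_square: "invol y * y \<in> posCone"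
  unfolding posCone_def by (auto intro!: exI[of _ "[y]"])

lemma posCone_conj:
  assumes "p \<in> posCone"
  shows "invol z * p * z \<in> posCone"
proof -
  have "invol z * sum_list (map (\<lambda>y. invol y * y) xs) * z
      = sum_list (map (\<lambda>y. invol y * y) (map (\<lambda>y. y * z) xs))" for xs
    by (induction xs) (simp_all add: algebra_simps invol_mult)
  with assms show ?thesis
    unfolding posCone_def by blast
qed

lemma posCone_scale_nat: "p \<in> posCone \<Longrightarrow> scaleQ (of_nat n) p \<in> posCone"
  by (induction n) (simp_all add: scaleQ_add_left scaleQ_one posCone_add)

text \<open>Write \<open>q = ab (1/b)\<^sup>2\<close> with integers \<open>a \<ge> 0\<close>, \<open>b > 0\<close>: the cone is closed under
  multiples by naturals and under conjugation by \<open>1/b\<close>.\<close>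
lemma posCone_scaleQ:
  assumes "p \<in> posCone" "(q::rat) \<ge> 0"
  shows "scaleQ q p \<in> posCone"
proof -
  obtain a b where q: "q = of_int a / of_int b" and b: "b > 0"
    using quotient_of_div quotient_of_denom_pos by (metis surj_pair)
  with assms(2) have a: "a \<ge> 0" by (auto simp: zero_le_divide_iff)
  let ?r = "1 / of_int b :: rat"
  have "invol (ratA ?r) * p * ratA ?r \<in> posCone"
    using assms(1) by (rule posCone_conj)
  then have "scaleQ (?r * ?r) p \<in> posCone"
    by (simp add: ratA_mult_left ratA_mult_right scaleQ_scaleQ)
  moreover have "q = of_nat (nat (a * b)) * (?r * ?r)"
    using a b q by (simp add: field_simps)
  ultimately have "scaleQ q p = scaleQ (of_nat (nat (a * b))) (scaleQ (?r * ?r) p)"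
    by (simp add: scaleQ_scaleQ)
  with \<open>scaleQ (?r * ?r) p \<in> posCone\<close> show ?thesis
    using posCone_scale_nat by simp
qed

lemma posCone_ratA: "(q::rat) \<ge> 0 \<Longrightarrow> ratA q \<in> posCone"
  unfolding ratA_def using posCone_scaleQ posCone_square[of 1] by simp

section \<open>Order bounds and seminorm bounds\<close>

definition order_bdd :: "'a::star_algebra \<Rightarrow> rat \<Rightarrow> bool" where
  "order_bdd z g \<longleftrightarrow> ratA g - z \<in> posCone \<and> ratA g + z \<in> posCone"

definition norm_bdd :: "'a::star_algebra \<Rightarrow> rat \<Rightarrow> bool" where
  "norm_bdd z g \<longleftrightarrow> ratA (g * g) - invol z * z \<in> posCone"

lemma commuting_cube_identity:
  fixes M u :: "'b::ring_1"
  assumes "M * u = u * M"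
  shows "(M - u) * (M + u) * (M - u) + (M + u) * (M - u) * (M + u) = (M * M - u * u) * (M + M)"
proof -
  have "u * (M * z) = M * (u * z)" for z by (metis assms mult.assoc)
  with assms show ?thesis by (simp add: algebra_simps)
qed

lemma commuting_square_identity:
  fixes M u :: "'b::ring_1"
  assumes "M * u = u * M"
  shows "(M - u) * (M - u) + (M * M - u * u) = (M - u) * (M + M)"
proof -
  have "u * (M * z) = M * (u * z)" for z by (metis assms mult.assoc)
  with assms show ?thesis by (simp add: algebra_simps)
qed

lemma order_bdd_imp_norm_bdd:
  fixes u :: "'a::star_algebra"
  assumes "order_bdd u m" "m > 0" "hermitian u"
  shows "norm_bdd u m"
proof -
  let ?M = "ratA m :: 'a"
  have "(?M - u) * (?M + u) * (?M - u) + (?M + u) * (?M - u) * (?M + u) \<in> posCone"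
    using assms posCone_conj[of "?M + u" "?M - u"] posCone_conj[of "?M - u" "?M + u"]
    by (intro posCone_add) (simp_all add: order_bdd_def invol_diff invol_add)
  also have "(?M - u) * (?M + u) * (?M - u) + (?M + u) * (?M - u) * (?M + u)
      = (?M * ?M - u * u) * (?M + ?M)"
    by (rule commuting_cube_identity[OF ratA_commute])
  also have "\<dots> = scaleQ (2 * m) (?M * ?M - u * u)"
    by (simp only: ratA_double ratA_mult_right)
  finally have "scaleQ (2 * m) (?M * ?M - u * u) \<in> posCone" .
  then have "scaleQ (1 / (2 * m)) (scaleQ (2 * m) (?M * ?M - u * u)) \<in> posCone"
    by (rule posCone_scaleQ) (use assms(2) in simp)
  then show ?thesis
    using assms(2,3) by (simp add: norm_bdd_def ratA_mult scaleQ_scaleQ scaleQ_one)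
qed

lemma norm_bdd_imp_le:
  fixes u :: "'a::star_algebra"
  assumes "norm_bdd u m" "m > 0" "hermitian u"
  shows "ratA m - u \<in> posCone"
proof -
  let ?M = "ratA m :: 'a"
  have "invol (?M - u) * (?M - u) + (?M * ?M - u * u) \<in> posCone"
    using assms(1,3) by (intro posCone_add posCone_square) (simp add: norm_bdd_def ratA_mult)
  also have "invol (?M - u) * (?M - u) + (?M * ?M - u * u) = (?M - u) * (?M + ?M)"
    using assms(3) commuting_square_identity[OF ratA_commute] by (simp add: invol_diff)
  also have "\<dots> = scaleQ (2 * m) (?M - u)"
    by (simp only: ratA_double ratA_mult_right)
  finally have "scaleQ (2 * m) (?M - u) \<in> posCone" .
  then have "scaleQ (1 / (2 * m)) (scaleQ (2 * m) (?M - u)) \<in> posCone"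
    by (rule posCone_scaleQ) (use assms(2) in simp)
  then show ?thesis
    using assms(2) by (simp add: scaleQ_scaleQ scaleQ_one)
qed

lemma order_bdd_iff_norm_bdd:
  fixes u :: "'a::star_algebra"
  assumes "m > 0" "hermitian u"
  shows "order_bdd u m \<longleftrightarrow> norm_bdd u m"
proof
  assume "norm_bdd u m"
  moreover from this have "norm_bdd (- u) m"
    by (simp add: norm_bdd_def invol_minus)
  ultimately show "order_bdd u m"
    using norm_bdd_imp_le[of u m] norm_bdd_imp_le[of "- u" m] assms
    by (simp add: order_bdd_def invol_minus)
qed (use order_bdd_imp_norm_bdd assms in blast)

lemma norm_bdd_mult:
  fixes a b :: "'a::star_algebra"
  assumes "norm_bdd a \<alpha>" "norm_bdd b \<beta>"
  shows "norm_bdd (a * b) (\<alpha> * \<beta>)"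
proof -
  have "invol b * (ratA (\<alpha> * \<alpha>) - invol a * a) * b
      + scaleQ (\<alpha> * \<alpha>) (ratA (\<beta> * \<beta>) - invol b * b) \<in> posCone"
    using assms by (intro posCone_add posCone_conj posCone_scaleQ) (simp_all add: norm_bdd_def)
  also have "invol b * (ratA (\<alpha> * \<alpha>) - invol a * a) * b
      + scaleQ (\<alpha> * \<alpha>) (ratA (\<beta> * \<beta>) - invol b * b)
      = ratA ((\<alpha> * \<beta>) * (\<alpha> * \<beta>)) - invol (a * b) * (a * b)"
    by (simp add: algebra_simps invol_mult scaleQ_diff_right scaleQ_ratA ratA_mult_left
        mult_scaleQ_right)
  finally show ?thesis by (simp add: norm_bdd_def)
qed

lemma order_bdd_0: "g \<ge> 0 \<Longrightarrow> order_bdd 0 g"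
  by (simp add: order_bdd_def posCone_ratA)

lemma order_bdd_1: "order_bdd (1::'a::star_algebra) 1"
proof -
  have "(2::'a) = ratA 2"
    using ratA_double[of 1, where 'a='a] by simp
  then show ?thesis
    using posCone_ratA[of 2, where 'a='a] by (simp add: order_bdd_def)
qed

lemma order_bdd_minus: "order_bdd (- z) g \<longleftrightarrow> order_bdd z g"
  by (auto simp: order_bdd_def)

lemma order_bdd_mono:
  assumes "order_bdd z g" "g \<le> g'"
  shows "order_bdd z g'"
proof -
  have "ratA g' - z = (ratA g - z) + ratA (g' - g)" "ratA g' + z = (ratA g + z) + ratA (g' - g)"
    by (simp_all add: ratA_diff)
  then show ?thesis
    using assms(1) posCone_add[OF _ posCone_ratA[of "g' - g"]] assms(2)
    unfolding order_bdd_def by (metis diff_ge_0_iff_ge)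
qed

lemma order_bdd_add:
  assumes "order_bdd a \<alpha>" "order_bdd b \<beta>"
  shows "order_bdd (a + b) (\<alpha> + \<beta>)"
proof -
  have "ratA (\<alpha> + \<beta>) - (a + b) = (ratA \<alpha> - a) + (ratA \<beta> - b)"
       "ratA (\<alpha> + \<beta>) + (a + b) = (ratA \<alpha> + a) + (ratA \<beta> + b)"
    by (simp_all add: ratA_add)
  with assms show ?thesis
    using posCone_add unfolding order_bdd_def by metis
qed

lemma order_bdd_diff: "order_bdd a \<alpha> \<Longrightarrow> order_bdd b \<beta> \<Longrightarrow> order_bdd (a - b) (\<alpha> + \<beta>)"
  using order_bdd_add[of a \<alpha> "- b" \<beta>] by (simp add: order_bdd_minus)

lemma order_bdd_scaleQ:
  assumes "order_bdd z g"
  shows "order_bdd (scaleQ q z) (\<bar>q\<bar> * g)"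
proof (cases "q \<ge> 0")
  case True
  have "ratA (\<bar>q\<bar> * g) - scaleQ q z = scaleQ q (ratA g - z)"
       "ratA (\<bar>q\<bar> * g) + scaleQ q z = scaleQ q (ratA g + z)"
    using True by (simp_all add: scaleQ_diff_right scaleQ_add_right scaleQ_ratA)
  then show ?thesis using assms True posCone_scaleQ by (auto simp: order_bdd_def)
next
  case False
  have "ratA (\<bar>q\<bar> * g) - scaleQ q z = scaleQ (- q) (ratA g + z)"
       "ratA (\<bar>q\<bar> * g) + scaleQ q z = scaleQ (- q) (ratA g - z)"
    using False
    by (simp_all add: scaleQ_diff_right scaleQ_add_right scaleQ_ratA scaleQ_minus_left)
  then show ?thesis using assms False posCone_scaleQ[of _ "- q"] by (auto simp: order_bdd_def)
qed

lemma order_bdd_sum: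
  assumes "finite S" "\<And>i. i \<in> S \<Longrightarrow> order_bdd (f i) (b i)" "\<And>i. i \<in> S \<Longrightarrow> b i \<ge> 0"
  shows "order_bdd (sum f S) (sum b S)"
  using assms by (induction S rule: finite_induct) (auto intro: order_bdd_add simp: order_bdd_0)

lemma order_bdd_power:
  fixes a :: "'a::star_algebra"
  assumes "order_bdd a m" "m > 0" "hermitian a"
  shows "order_bdd (a ^ n) (m ^ n)"
proof (induction n)
  case 0
  then show ?case by (simp add: order_bdd_1)
next
  case (Suc n)
  have "norm_bdd (a * a ^ n) (m * m ^ n)"
    using Suc assms by (intro norm_bdd_mult) (simp_all add: order_bdd_iff_norm_bdd hermitian_power)
  then show ?case
    using assms by (simp add: order_bdd_iff_norm_bdd hermitian_mult hermitian_power power_commutes)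
qed

section \<open>Convergence in the seminorm\<close>

lemma anorm_nonneg: "0 \<le> anorm (z::'a::star_algebra)"
proof (cases "bound_set z = {}")
  case False
  then have "0 \<le> Inf (real_of_rat ` bound_set z)"
    by (intro cInf_greatest) (auto simp: bound_set_def)
  with False show ?thesis by (simp add: anorm_def)
qed (simp add: anorm_def)

lemma norm_bdd_imp_anorm_le:
  fixes z :: "'a::star_algebra"
  assumes "norm_bdd z g" "g > 0"
  shows "anorm z \<le> ereal (real_of_rat g)"
proof -
  have mem: "g * g \<in> bound_set z"
    using assms by (simp add: bound_set_def sle_def norm_bdd_def)
  then have "Inf (real_of_rat ` bound_set z) \<le> real_of_rat (g * g)"
    by (intro cInf_lower) (auto simp: bound_set_def bdd_below_def intro!: exI[of _ 0])
  then have "sqrt (Inf (real_of_rat ` bound_set z)) \<le> sqrt (real_of_rat g * real_of_rat g)"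
    by (intro real_sqrt_le_mono) (simp add: of_rat_mult)
  also have "\<dots> = real_of_rat g"
    using assms(2) by simp
  finally show ?thesis
    using mem by (auto simp: anorm_def)
qed

lemma anorm_less_imp_norm_bdd:
  fixes z :: "'a::star_algebra"
  assumes "anorm z < ereal (real_of_rat g)" "g > 0"
  shows "norm_bdd z g"
proof -
  have ne: "bound_set z \<noteq> {}"
    using assms(1) by (auto simp: anorm_def)
  with assms(1) have "sqrt (Inf (real_of_rat ` bound_set z)) < real_of_rat g"
    by (simp add: anorm_def)
  also have "real_of_rat g = sqrt (real_of_rat (g * g))"
    using assms(2) by (simp add: of_rat_mult real_sqrt_abs2)
  finally have "Inf (real_of_rat ` bound_set z) < real_of_rat (g * g)"
    by (simp only: real_sqrt_less_iff)
  then obtain y where "y \<in> real_of_rat ` bound_set z" "y < real_of_rat (g * g)"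
    using ne by (meson cInf_lessD image_is_empty)
  then obtain \<beta> where \<beta>: "\<beta> \<in> bound_set z" "\<beta> < g * g"
    by (auto simp: of_rat_less)
  have "(ratA \<beta> - invol z * z) + ratA (g * g - \<beta>) \<in> posCone"
    using \<beta> by (intro posCone_add posCone_ratA) (simp_all add: bound_set_def sle_def)
  also have "(ratA \<beta> - invol z * z) + ratA (g * g - \<beta>) = ratA (g * g) - invol z * z"
    by (simp add: ratA_diff)
  finally show ?thesis
    by (simp add: norm_bdd_def)
qed

lemma order_bdd_imp_anorm_le:
  fixes z :: "'a::star_algebra"
  assumes "order_bdd z g" "g > 0" "hermitian z"
  shows "anorm z \<le> ereal (real_of_rat g)"
  using assms by (simp add: order_bdd_iff_norm_bdd norm_bdd_imp_anorm_le)

lemma anorm_less_imp_order_bdd: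
  fixes z :: "'a::star_algebra"
  assumes "anorm z < ereal (real_of_rat g)" "g > 0" "hermitian z"
  shows "order_bdd z g"
  using assms by (simp add: order_bdd_iff_norm_bdd anorm_less_imp_norm_bdd)

definition order_null :: "(nat \<Rightarrow> 'a::star_algebra) \<Rightarrow> bool" where
  "order_null z \<longleftrightarrow> (\<forall>e>0. \<exists>N. \<forall>n\<ge>N. order_bdd (z n) e)"

definition order_cauchy :: "(nat \<Rightarrow> 'a::star_algebra) \<Rightarrow> bool" where
  "order_cauchy u \<longleftrightarrow> (\<forall>e>0. \<exists>N. \<forall>m\<ge>N. \<forall>n\<ge>N. order_bdd (u m - u n) e)"

lemma order_bdd_scaleQ_le:
  assumes "order_bdd z (e / (\<bar>c\<bar> + 1))" "e > 0"
  shows "order_bdd (scaleQ c z) e"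
proof (rule order_bdd_mono)
  show "order_bdd (scaleQ c z) (\<bar>c\<bar> * (e / (\<bar>c\<bar> + 1)))"
    using assms(1) by (rule order_bdd_scaleQ)
  show "\<bar>c\<bar> * (e / (\<bar>c\<bar> + 1)) \<le> e"
    using assms(2) by (simp add: field_simps)
qed

lemma order_null_scaleQ:
  assumes "order_null z"
  shows "order_null (\<lambda>n. scaleQ c (z n))"
  unfolding order_null_def
proof (intro allI impI)
  fix e :: rat
  assume "e > 0"
  then have "e / (\<bar>c\<bar> + 1) > 0"
    by (simp add: add_nonneg_pos)
  then obtain N where "\<forall>n\<ge>N. order_bdd (z n) (e / (\<bar>c\<bar> + 1))"
    using assms by (auto simp: order_null_def)
  with \<open>e > 0\<close> show "\<exists>N. \<forall>n\<ge>N. order_bdd (scaleQ c (z n)) e"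
    using order_bdd_scaleQ_le by blast
qed

lemma order_cauchy_scaleQ:
  assumes "order_cauchy u"
  shows "order_cauchy (\<lambda>n. scaleQ c (u n))"
  unfolding order_cauchy_def
proof (intro allI impI)
  fix e :: rat
  assume "e > 0"
  then have "e / (\<bar>c\<bar> + 1) > 0"
    by (simp add: add_nonneg_pos)
  then obtain N where "\<forall>m\<ge>N. \<forall>n\<ge>N. order_bdd (u m - u n) (e / (\<bar>c\<bar> + 1))"
    using assms by (auto simp: order_cauchy_def)
  with \<open>e > 0\<close> show "\<exists>N. \<forall>m\<ge>N. \<forall>n\<ge>N. order_bdd (scaleQ c (u m) - scaleQ c (u n)) e"
    by (auto simp: scaleQ_diff_right[symmetric] intro!: order_bdd_scaleQ_le)
qed

lemma ereal_pos_obtain_rat_less: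
  assumes "0 < b"
  obtains e :: rat where "e > 0" "ereal (real_of_rat e) < b"
proof (cases b)
  case (real r)
  with assms obtain q :: rat where "0 < real_of_rat q" "real_of_rat q < r"
    using of_rat_dense[of 0 r] by auto
  with real that show ?thesis
    by (simp add: of_rat_less[symmetric, of 0])
next
  case PInf
  with that[of 1] show ?thesis
    by simp
qed (use assms in simp)

lemma tendsto_anorm_if_order_null:
  fixes z :: "nat \<Rightarrow> 'a::star_algebra"
  assumes "\<And>n. hermitian (z n)" "order_null z"
  shows "(\<lambda>n. anorm (z n)) \<longlonglongrightarrow> 0"
proof (rule order_tendstoI)
  fix a :: ereal
  assume "a < 0"
  then show "\<forall>\<^sub>F n in sequentially. a < anorm (z n)"
    using anorm_nonneg by (intro always_eventually allI) (rule order_less_le_trans)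
next
  fix b :: ereal
  assume "0 < b"
  then obtain e :: rat where e: "e > 0" "ereal (real_of_rat e) < b"
    by (rule ereal_pos_obtain_rat_less)
  then obtain N where N: "\<forall>n\<ge>N. order_bdd (z n) e"
    using assms(2) by (auto simp: order_null_def)
  show "\<forall>\<^sub>F n in sequentially. anorm (z n) < b"
    unfolding eventually_sequentially
  proof (intro exI allI impI)
    fix n
    assume "N \<le> n"
    then have "anorm (z n) \<le> ereal (real_of_rat e)"
      using N e(1) assms(1) by (intro order_bdd_imp_anorm_le) auto
    also have "\<dots> < b"
      by (rule e(2))
    finally show "anorm (z n) < b" .
  qed
qed

lemma acauchy_if_order_cauchy:
  fixes u :: "nat \<Rightarrow> 'a::star_algebra"
  assumes "\<And>n. hermitian (u n)" "order_cauchy u"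
  shows "acauchy u"
  unfolding acauchy_def
proof (intro allI impI)
  fix e :: real
  assume "e > 0"
  obtain e' :: rat where e': "e' > 0" "ereal (real_of_rat e') < ereal e"
    by (rule ereal_pos_obtain_rat_less[of "ereal e"]) (use \<open>e > 0\<close> in auto)
  obtain N where N: "\<forall>m\<ge>N. \<forall>n\<ge>N. order_bdd (u m - u n) e'"
    using assms(2) e'(1) by (auto simp: order_cauchy_def)
  show "\<exists>N. \<forall>m\<ge>N. \<forall>n\<ge>N. anorm (u m - u n) < ereal e"
  proof (intro exI allI impI)
    fix m n
    assume "N \<le> m" "N \<le> n"
    then have "anorm (u m - u n) \<le> ereal (real_of_rat e')"
      using N e'(1) assms(1) by (intro order_bdd_imp_anorm_le hermitian_diff) auto
    also have "\<dots> < ereal e"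
      by (rule e'(2))
    finally show "anorm (u m - u n) < ereal e" .
  qed
qed

section \<open>Positive elements of \<open>C\<^sup>*(A)\<close>\<close>

lemma cs_pos_cs_ofI:
  fixes x :: "'a::star_algebra"
  assumes "\<And>n. hermitian (a n)" "order_cauchy a"
    and "hermitian x" "order_null (\<lambda>n. x - a n * a n)"
  shows "cs_pos (cs_of x)"
proof -
  have zero_null: "order_null (\<lambda>n. 0::'a)" and zero_cauchy: "order_cauchy (\<lambda>n. 0::'a)"
    by (simp_all add: order_null_def order_cauchy_def order_bdd_0)
  have "cs_valid (a, \<lambda>n. 0)"
    using assms(1,2) zero_cauchy by (simp add: cs_valid_def acauchy_if_order_cauchy)
  moreover have "cs_eq (cs_of x) (cs_mult (cs_star (a, \<lambda>n. 0)) (a, \<lambda>n. 0))"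
    using tendsto_anorm_if_order_null[OF _ assms(4)] tendsto_anorm_if_order_null[OF _ zero_null]
      assms(1,3)
    by (simp add: cs_eq_def cs_of_def cs_mult_def cs_star_def hermitian_diff hermitian_mult)
  ultimately show ?thesis
    unfolding cs_pos_def by blast
qed

lemma nonneg_if_cs_pos:
  fixes x :: "'a::star_algebra"
  assumes "hermitian x" "cs_pos (cs_of x)" "\<alpha> > 0"
  shows "x + ratA \<alpha> \<in> posCone"
proof -
  obtain y where "cs_eq (cs_of x) (cs_mult (cs_star y) y)"
    using assms(2) by (auto simp: cs_pos_def)
  moreover define p where "p n = invol (fst y n) * fst y n + invol (snd y n) * snd y n" for n
  ultimately have "(\<lambda>n. anorm (x - p n)) \<longlonglongrightarrow> 0"
    by (simp add: cs_eq_def cs_of_def cs_mult_def cs_star_def)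
  moreover have "(0::ereal) < ereal (real_of_rat \<alpha>)"
    using assms(3) by simp
  ultimately have "\<forall>\<^sub>F n in sequentially. anorm (x - p n) < ereal (real_of_rat \<alpha>)"
    by (rule order_tendstoD(2))
  then obtain n where n: "anorm (x - p n) < ereal (real_of_rat \<alpha>)"
    by (auto simp: eventually_sequentially)
  have "p n \<in> posCone" and "hermitian (p n)"
    unfolding p_def by (intro posCone_add posCone_square hermitian_add hermitian_square)+
  with n have "order_bdd (x - p n) \<alpha>"
    using assms by (intro anorm_less_imp_order_bdd hermitian_diff) auto
  then have "ratA \<alpha> + (x - p n) \<in> posCone"
    by (simp add: order_bdd_def)
  from posCone_add[OF \<open>p n \<in> posCone\<close> this] show ?thesis
    by (simp add: algebra_simps)
qed

section \<open>The binomial series of the square root\<close>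

abbreviation sqrt_coeff :: "nat \<Rightarrow> rat" where
  "sqrt_coeff k \<equiv> (1/2) gchoose k"

text \<open>The tail \<open>\<Sum>\<^sub>j\<^sub>>\<^sub>k |sqrt_coeff j|\<close> of the absolutely convergent coefficient
  series, in closed form (cf. \<open>sum_abs_sqrt_coeff_tail\<close>); it decreases like \<open>1/\<surd>k\<close>.\<close>
definition sqrt_coeff_tail :: "nat \<Rightarrow> rat" where
  "sqrt_coeff_tail k = (2 * of_nat k + 2) * \<bar>sqrt_coeff (Suc k)\<bar>"

lemma abs_sqrt_coeff_Suc_Suc:
  "\<bar>sqrt_coeff (Suc (Suc k))\<bar> = \<bar>sqrt_coeff (Suc k)\<bar> * (2 * of_nat k + 1) / (2 * of_nat k + 4)"
proof -
  have "(1/2) * sqrt_coeff (Suc k)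
      = of_nat (Suc k) * sqrt_coeff (Suc k) + of_nat (Suc (Suc k)) * sqrt_coeff (Suc (Suc k))"
    by (rule gbinomial_mult_1)
  then have "sqrt_coeff (Suc (Suc k))
      = - sqrt_coeff (Suc k) * (2 * of_nat k + 1) / (2 * of_nat k + 4)"
    by (simp add: field_simps)
  then show ?thesis
    by (simp add: abs_mult abs_divide)
qed

lemma sqrt_coeff_tail_Suc:
  "sqrt_coeff_tail (Suc k) = sqrt_coeff_tail k * (2 * of_nat k + 1) / (2 * of_nat k + 2)"
  unfolding sqrt_coeff_tail_def abs_sqrt_coeff_Suc_Suc by (simp add: field_simps)

lemma abs_sqrt_coeff_Suc: "\<bar>sqrt_coeff (Suc k)\<bar> = sqrt_coeff_tail k - sqrt_coeff_tail (Suc k)"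
  unfolding sqrt_coeff_tail_def abs_sqrt_coeff_Suc_Suc by (simp add: field_simps)

lemma sqrt_coeff_tail_nonneg: "sqrt_coeff_tail k \<ge> 0"
  by (simp add: sqrt_coeff_tail_def)

lemma sqrt_coeff_tail_antimono: "m \<le> n \<Longrightarrow> sqrt_coeff_tail n \<le> sqrt_coeff_tail m"
proof (induction n rule: dec_induct)
  case (step n)
  then show ?case
    using abs_sqrt_coeff_Suc[of n] by linarith
qed simp

lemma sqrt_coeff_tail_square_le: "sqrt_coeff_tail k * sqrt_coeff_tail k * (2 * of_nat k + 1) \<le> 1"
proof (induction k)
  case 0
  then show ?case by (simp add: sqrt_coeff_tail_def)
next
  case (Suc k)
  let ?r = "(2 * of_nat k + 1) * (2 * of_nat k + 3) / ((2 * of_nat k + 2) * (2 * of_nat k + 2))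
    :: rat"
  have "sqrt_coeff_tail (Suc k) * sqrt_coeff_tail (Suc k) * (2 * of_nat (Suc k) + 1)
      = (sqrt_coeff_tail k * sqrt_coeff_tail k * (2 * of_nat k + 1)) * ?r"
    by (simp add: sqrt_coeff_tail_Suc field_simps)
  also have "\<dots> \<le> 1 * 1"
  proof (rule mult_mono)
    have "(2 * of_nat k + 1) * (2 * of_nat k + 3)
        \<le> ((2 * of_nat k + 2) * (2 * of_nat k + 2) :: rat)"
      by (simp add: algebra_simps)
    then show "?r \<le> 1"
      by simp
  qed (use Suc in auto)
  finally show ?case by simp
qed

lemma sqrt_coeff_tail_small:
  assumes "e > 0"
  obtains M where "sqrt_coeff_tail M \<le> e"
proof -
  obtain M :: nat where M: "1 / (e * e) < of_nat M"
    using reals_Archimedean2 by blast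
  have "sqrt_coeff_tail M * sqrt_coeff_tail M * (2 * of_nat M + 1) \<le> 1"
    by (rule sqrt_coeff_tail_square_le)
  moreover have "1 \<le> e * e * (2 * of_nat M + 1)"
  proof -
    have "1 < e * e * of_nat M"
      using M assms by (simp add: field_simps)
    also have "\<dots> \<le> e * e * (2 * of_nat M + 1)"
      by (intro mult_left_mono) auto
    finally show ?thesis by simp
  qed
  ultimately have "sqrt_coeff_tail M * sqrt_coeff_tail M * (2 * of_nat M + 1)
      \<le> e * e * (2 * of_nat M + 1)"
    by linarith
  then have "(sqrt_coeff_tail M)\<^sup>2 \<le> e\<^sup>2"
    unfolding power2_eq_square by (rule mult_right_le_imp_le) simp
  then have "sqrt_coeff_tail M \<le> e"
    by (rule power2_le_imp_le) (use assms in simp)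
  then show ?thesis
    by (rule that)
qed

lemma sum_abs_sqrt_coeff_tail:
  "M \<le> N \<Longrightarrow> (\<Sum>k\<in>{M<..N}. \<bar>sqrt_coeff k\<bar>) = sqrt_coeff_tail M - sqrt_coeff_tail N"
proof (induction N rule: dec_induct)
  case (step n)
  then have "{M<..Suc n} = insert (Suc n) {M<..n}"
    by auto
  with step show ?case
    by (simp add: abs_sqrt_coeff_Suc)
qed simp

lemma sum_abs_sqrt_coeff_le: "(\<Sum>k\<le>N. \<bar>sqrt_coeff k\<bar>) \<le> 2"
proof -
  have "{..N} = insert 0 {0<..N}"
    by auto
  then have "(\<Sum>k\<le>N. \<bar>sqrt_coeff k\<bar>) = 1 + (sqrt_coeff_tail 0 - sqrt_coeff_tail N)"
    by (simp add: sum_abs_sqrt_coeff_tail)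
  then show ?thesis
    using sqrt_coeff_tail_nonneg[of N] by (simp add: sqrt_coeff_tail_def)
qed

lemma sqrt_coeff_convolution: "(\<Sum>i\<le>k. sqrt_coeff i * sqrt_coeff (k - i)) = (if k \<le> 1 then 1 else 0)"
proof -
  have "(\<Sum>i\<le>k. sqrt_coeff i * sqrt_coeff (k - i)) = (1/2 + 1/2 :: rat) gchoose k"
    unfolding gbinomial_Vandermonde[symmetric] by (simp add: atLeast0AtMost)
  also have "\<dots> = of_nat (1 choose k)"
    using binomial_gbinomial[of 1 k, where 'a=rat] by simp
  finally show ?thesis
    by (cases k) (auto simp: binomial_eq_0)
qed

lemma one_plus_power_le:
  assumes "(a::rat) \<ge> 0" "of_nat n * a \<le> 1/2"
  shows "(1 + a) ^ n \<le> 1 + 2 * of_nat n * a"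
  using assms(2)
proof (induction n)
  case (Suc n)
  then have h: "of_nat n * a \<le> 1/2"
    using assms(1) by (simp add: algebra_simps)
  have "(1 + a) ^ Suc n \<le> (1 + a) * (1 + 2 * of_nat n * a)"
    using Suc.IH[OF h] assms(1) by (simp add: mult_left_mono)
  also have "\<dots> \<le> 1 + 2 * of_nat (Suc n) * a"
    using mult_left_mono[OF h assms(1)] by (simp add: algebra_simps)
  finally show ?case .
qed simp

definition sqrt_partial_sum :: "'a::star_algebra \<Rightarrow> nat \<Rightarrow> 'a" where
  "sqrt_partial_sum v N = (\<Sum>k\<le>N. scaleQ (sqrt_coeff k) (v ^ k))"

lemma hermitian_sqrt_partial_sum: "hermitian v \<Longrightarrow> hermitian (sqrt_partial_sum v N)"
  unfolding sqrt_partial_sum_def by (intro hermitian_sum hermitian_scaleQ hermitian_power)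

definition high_pairs :: "nat \<Rightarrow> (nat \<times> nat) set" where
  "high_pairs N = {(i, j). i \<le> N \<and> j \<le> N \<and> N < i + j}"

lemma finite_high_pairs: "finite (high_pairs N)"
  by (rule finite_subset[of _ "{..N} \<times> {..N}"]) (auto simp: high_pairs_def)

lemma sqrt_partial_sum_square:
  fixes v :: "'a::star_algebra"
  assumes "N \<ge> 1"
  shows "sqrt_partial_sum v N * sqrt_partial_sum v N - (1 + v)
    = (\<Sum>(i, j)\<in>high_pairs N. scaleQ (sqrt_coeff i * sqrt_coeff j) (v ^ (i + j)))"
proof -
  define f where "f = (\<lambda>(i, j). scaleQ (sqrt_coeff i * sqrt_coeff j) (v ^ (i + j)))"
  define low where "low = {(i, j). i + j < Suc N}"
  have "finite low"
    by (rule finite_subset[of _ "{..N} \<times> {..N}"]) (auto simp: low_def)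
  have "sqrt_partial_sum v N * sqrt_partial_sum v N
      = (\<Sum>i\<le>N. \<Sum>j\<le>N. scaleQ (sqrt_coeff i) (v ^ i) * scaleQ (sqrt_coeff j) (v ^ j))"
    unfolding sqrt_partial_sum_def by (rule sum_product)
  also have "\<dots> = (\<Sum>p\<in>{..N} \<times> {..N}. f p)"
    by (simp add: f_def sum.cartesian_product mult_scaleQ_left mult_scaleQ_right scaleQ_scaleQ
        power_add mult.commute)
  also have "{..N} \<times> {..N} = low \<union> high_pairs N"
    by (auto simp: low_def high_pairs_def)
  also have "(\<Sum>p\<in>low \<union> high_pairs N. f p) = (\<Sum>p\<in>low. f p) + (\<Sum>p\<in>high_pairs N. f p)"
    using \<open>finite low\<close> finite_high_pairs
    by (intro sum.union_disjoint) (auto simp: low_def high_pairs_def)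
  also have "(\<Sum>p\<in>low. f p) = (\<Sum>k<Suc N. \<Sum>i\<le>k. scaleQ (sqrt_coeff i * sqrt_coeff (k - i)) (v ^ k))"
    unfolding low_def f_def by (subst sum.triangle_reindex) simp
  also have "\<dots> = (\<Sum>k<Suc N. scaleQ (if k \<le> 1 then 1 else 0) (v ^ k))"
    by (simp add: scaleQ_sum_left[symmetric] sqrt_coeff_convolution del: gbinomial_Suc0)
  also have "\<dots> = 1 + v"
    using assms by (induction N rule: dec_induct) (simp_all add: scaleQ_one lessThan_Suc)
  finally show ?thesis
    by (simp add: f_def)
qed

lemma order_bdd_polynomial:
  fixes v :: "'a::star_algebra"
  assumes "hermitian v" "\<And>a. a > 0 \<Longrightarrow> order_bdd v (1 + a)"
    and "finite S" "\<And>k. k \<in> S \<Longrightarrow> d k \<le> n"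
  shows "order_bdd (\<Sum>k\<in>S. scaleQ (c k) (v ^ d k)) (2 * (\<Sum>k\<in>S. \<bar>c k\<bar>))"
proof -
  define a :: rat where "a = 1 / (2 * of_nat n + 2)"
  have "a > 0" and "of_nat n * a \<le> 1/2"
    by (simp_all add: a_def field_simps)
  then have "(1 + a) ^ n \<le> 2"
    using one_plus_power_le[of a n] by simp
  have "order_bdd (\<Sum>k\<in>S. scaleQ (c k) (v ^ d k)) (\<Sum>k\<in>S. \<bar>c k\<bar> * (1 + a) ^ d k)"
    using \<open>a > 0\<close> assms by (intro order_bdd_sum order_bdd_scaleQ order_bdd_power) auto
  moreover have "(\<Sum>k\<in>S. \<bar>c k\<bar> * (1 + a) ^ d k) \<le> (\<Sum>k\<in>S. \<bar>c k\<bar> * 2)"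
  proof (rule sum_mono)
    fix k
    assume "k \<in> S"
    then have "(1 + a) ^ d k \<le> (1 + a) ^ n"
      using \<open>a > 0\<close> assms(4) by (simp add: power_increasing)
    with \<open>(1 + a) ^ n \<le> 2\<close> show "\<bar>c k\<bar> * (1 + a) ^ d k \<le> \<bar>c k\<bar> * 2"
      by (simp add: mult_left_mono)
  qed
  ultimately show ?thesis
    by (simp add: order_bdd_mono sum_distrib_right[symmetric] mult.commute)
qed

text \<open>In every pair of \<open>high_pairs N\<close> one index exceeds \<open>N div 2\<close>.\<close>
lemma sum_high_pairs_le:
  "(\<Sum>(i, j)\<in>high_pairs N. \<bar>sqrt_coeff i\<bar> * \<bar>sqrt_coeff j\<bar>) \<le> 4 * sqrt_coeff_tail (N div 2)"
proof -
  define h where "h = (\<lambda>(i, j). \<bar>sqrt_coeff i\<bar> * \<bar>sqrt_coeff j\<bar>)"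
  define T where "T = {N div 2<..N}"
  have h_nonneg: "0 \<le> h p" for p
    by (cases p) (simp add: h_def)
  have "sum h (high_pairs N) \<le> sum h ({..N} \<times> T \<union> T \<times> {..N})"
    using h_nonneg by (intro sum_mono2) (auto simp: high_pairs_def T_def)
  also have "\<dots> \<le> sum h ({..N} \<times> T) + sum h (T \<times> {..N})"
    using sum_Un[of "{..N} \<times> T" "T \<times> {..N}" h] sum_nonneg[of _ h] h_nonneg
    by (simp add: T_def)
  also have "\<dots> = 2 * (\<Sum>i\<le>N. \<bar>sqrt_coeff i\<bar>) * (\<Sum>j\<in>T. \<bar>sqrt_coeff j\<bar>)"
    by (simp add: h_def sum_product sum.cartesian_product[symmetric] sum.swap[of _ T] mult.commute)
  also have "(\<Sum>j\<in>T. \<bar>sqrt_coeff j\<bar>) = sqrt_coeff_tail (N div 2) - sqrt_coeff_tail N"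
    unfolding T_def by (rule sum_abs_sqrt_coeff_tail) simp
  also have "2 * (\<Sum>i\<le>N. \<bar>sqrt_coeff i\<bar>) * (sqrt_coeff_tail (N div 2) - sqrt_coeff_tail N)
      \<le> 2 * 2 * (sqrt_coeff_tail (N div 2) - sqrt_coeff_tail N)"
  proof (rule mult_right_mono)
    show "2 * (\<Sum>i\<le>N. \<bar>sqrt_coeff i\<bar>) \<le> 2 * 2"
      using sum_abs_sqrt_coeff_le[of N] by simp
    show "0 \<le> sqrt_coeff_tail (N div 2) - sqrt_coeff_tail N"
      using sqrt_coeff_tail_antimono[of "N div 2" N] by simp
  qed
  also have "\<dots> \<le> 4 * sqrt_coeff_tail (N div 2)"
    using sqrt_coeff_tail_nonneg[of N] by simp
  finally show ?thesis
    by (simp add: h_def)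
qed

context
  fixes v :: "'a::star_algebra"
  assumes hermitian_v: "hermitian v"
    and order_bdd_v: "\<And>a. a > 0 \<Longrightarrow> order_bdd v (1 + a)"
begin

lemma order_bdd_sqrt_partial_sum_square:
  assumes "N \<ge> 1"
  shows "order_bdd (sqrt_partial_sum v N * sqrt_partial_sum v N - (1 + v))
    (8 * sqrt_coeff_tail (N div 2))"
proof -
  have "order_bdd (sqrt_partial_sum v N * sqrt_partial_sum v N - (1 + v))
      (2 * (\<Sum>p\<in>high_pairs N. \<bar>sqrt_coeff (fst p) * sqrt_coeff (snd p)\<bar>))"
    unfolding sqrt_partial_sum_square[OF assms] case_prod_unfold
    using hermitian_v order_bdd_v finite_high_pairs
    by (rule order_bdd_polynomial[where n = "2 * N"]) (auto simp: high_pairs_def)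
  then show ?thesis
    using sum_high_pairs_le[of N]
    by (auto simp: case_prod_unfold abs_mult intro: order_bdd_mono)
qed

lemma order_bdd_sqrt_partial_sum_diff:
  assumes "M \<le> N"
  shows "order_bdd (sqrt_partial_sum v N - sqrt_partial_sum v M) (2 * sqrt_coeff_tail M)"
proof -
  have split: "{..N} = {..M} \<union> {M<..N}"
    using assms by auto
  have "sqrt_partial_sum v N - sqrt_partial_sum v M = (\<Sum>k\<in>{M<..N}. scaleQ (sqrt_coeff k) (v ^ k))"
    unfolding sqrt_partial_sum_def split by (subst sum.union_disjoint) auto
  moreover have "order_bdd (\<Sum>k\<in>{M<..N}. scaleQ (sqrt_coeff k) (v ^ k))
      (2 * (sqrt_coeff_tail M - sqrt_coeff_tail N))"
    using order_bdd_polynomial[OF hermitian_v order_bdd_v, of "{M<..N}" id N sqrt_coeff]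
    by (simp add: sum_abs_sqrt_coeff_tail[OF assms])
  ultimately show ?thesis
    using sqrt_coeff_tail_nonneg[of N] by (auto intro: order_bdd_mono)
qed

lemma order_cauchy_sqrt_partial_sum: "order_cauchy (sqrt_partial_sum v)"
  unfolding order_cauchy_def
proof (intro allI impI)
  fix e :: rat
  assume "e > 0"
  obtain M where M: "sqrt_coeff_tail M \<le> e / 4"
    by (rule sqrt_coeff_tail_small[of "e / 4"]) (use \<open>e > 0\<close> in auto)
  have "order_bdd (sqrt_partial_sum v m - sqrt_partial_sum v n) e" if "M \<le> m" "M \<le> n" for m n
  proof -
    let ?s = "sqrt_partial_sum v"
    have "order_bdd ((?s m - ?s M) - (?s n - ?s M)) (2 * sqrt_coeff_tail M + 2 * sqrt_coeff_tail M)"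
      using that by (intro order_bdd_diff order_bdd_sqrt_partial_sum_diff)
    then show ?thesis
      using M by (auto intro: order_bdd_mono)
  qed
  then show "\<exists>N. \<forall>m\<ge>N. \<forall>n\<ge>N. order_bdd (sqrt_partial_sum v m - sqrt_partial_sum v n) e"
    by blast
qed

lemma order_null_sqrt_partial_sum_square:
  "order_null (\<lambda>n. sqrt_partial_sum v n * sqrt_partial_sum v n - (1 + v))"
  unfolding order_null_def
proof (intro allI impI)
  fix e :: rat
  assume "e > 0"
  obtain M where M: "sqrt_coeff_tail M \<le> e / 8"
    by (rule sqrt_coeff_tail_small[of "e / 8"]) (use \<open>e > 0\<close> in auto)
  have "order_bdd (sqrt_partial_sum v n * sqrt_partial_sum v n - (1 + v)) e"
    if "Suc (2 * M) \<le> n" for n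
  proof (rule order_bdd_mono)
    show "order_bdd (sqrt_partial_sum v n * sqrt_partial_sum v n - (1 + v))
        (8 * sqrt_coeff_tail (n div 2))"
      using that by (intro order_bdd_sqrt_partial_sum_square) simp
    show "8 * sqrt_coeff_tail (n div 2) \<le> e"
      using M sqrt_coeff_tail_antimono[of M "n div 2"] that by linarith
  qed
  then show "\<exists>N. \<forall>n\<ge>N. order_bdd (sqrt_partial_sum v n * sqrt_partial_sum v n - (1 + v)) e"
    by blast
qed

end

section \<open>Square roots of nonnegative elements\<close>

lemma order_bdd_if_anorm_finite:
  fixes x :: "'a::star_algebra"
  assumes "anorm x < \<infinity>" "hermitian x"
  obtains K where "K \<ge> 1" "order_bdd x K"
proof -
  obtain r where r: "anorm x = ereal r"
    using assms(1) anorm_nonneg[of x] by (cases "anorm x") auto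
  obtain n :: nat where "r < of_nat n"
    using reals_Archimedean2 by blast
  define K :: rat where "K = of_nat n + 1"
  have "anorm x < ereal (real_of_rat K)"
    using r \<open>r < of_nat n\<close> by (simp add: K_def of_rat_add)
  then have "order_bdd x K"
    by (rule anorm_less_imp_order_bdd) (simp_all add: K_def assms(2))
  then show ?thesis
    by (rule that[rotated]) (simp add: K_def)
qed

lemma order_bdd_normalized:
  fixes x :: "'a::star_algebra"
  assumes "K \<ge> 1" "order_bdd x K" "\<And>\<alpha>. \<alpha> > 0 \<Longrightarrow> x + ratA \<alpha> \<in> posCone" "a > 0"
  shows "order_bdd (scaleQ (1 / (K * K)) x - 1) (1 + a)"
proof -
  let ?q = "1 / (K * K)"
  have "?q > 0"
    using assms(1) by simp
  have two: "ratA (2 + a) = ratA (1 + a) + (1::'a)"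
    using ratA_add[of "1 + a" 1] by (simp add: add.commute add.left_commute)
  have "scaleQ ?q ((ratA K - x) + ratA ((2 + a) * (K * K) - K))
      = scaleQ ?q (ratA ((2 + a) * (K * K)) - x)"
    by (simp add: ratA_diff)
  also have "\<dots> = ratA (1 + a) - (scaleQ ?q x - 1)"
    using assms(1) two by (simp add: scaleQ_diff_right scaleQ_ratA)
  finally have upper: "ratA (1 + a) - (scaleQ ?q x - 1)
      = scaleQ ?q ((ratA K - x) + ratA ((2 + a) * (K * K) - K))"
    by simp
  have lower: "ratA (1 + a) + (scaleQ ?q x - 1) = scaleQ ?q (x + ratA (a * (K * K)))"
    using assms(1) by (simp add: scaleQ_add_right scaleQ_ratA ratA_add)
  have "K \<le> (2 + a) * (K * K)"
  proof -
    have "K \<le> K * K"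
      using assms(1) by (simp add: mult_le_cancel_left1)
    also have "\<dots> \<le> (2 + a) * (K * K)"
      using assms(4) by (simp add: mult_le_cancel_right1)
    finally show ?thesis .
  qed
  then have "(ratA K - x) + ratA ((2 + a) * (K * K) - K) \<in> posCone"
    using assms(2) by (intro posCone_add posCone_ratA) (simp_all add: order_bdd_def)
  moreover have "x + ratA (a * (K * K)) \<in> posCone"
    using assms(1,3,4) by simp
  ultimately show ?thesis
    unfolding order_bdd_def upper lower using \<open>?q > 0\<close> by (simp add: posCone_scaleQ)
qed

lemma cs_pos_if_nonneg:
  fixes x :: "'a::star_algebra"
  assumes "archimedean_star TYPE('a)" "hermitian x" "\<And>\<alpha>. \<alpha> > 0 \<Longrightarrow> x + ratA \<alpha> \<in> posCone"
  shows "cs_pos (cs_of x)"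
proof -
  obtain K where K: "K \<ge> 1" "order_bdd x K"
    using assms(1,2) order_bdd_if_anorm_finite by (auto simp: archimedean_star_def)
  define v where "v = scaleQ (1 / (K * K)) x - 1"
  have v: "hermitian v" "\<And>a. a > 0 \<Longrightarrow> order_bdd v (1 + a)"
    using K assms(2,3) by (simp_all add: v_def hermitian_diff hermitian_scaleQ order_bdd_normalized)
  have x_eq: "x = scaleQ (K * K) (1 + v)"
    using K(1) by (simp add: v_def scaleQ_scaleQ scaleQ_one)
  define a where "a n = scaleQ K (sqrt_partial_sum v n)" for n
  show ?thesis
  proof (rule cs_pos_cs_ofI)
    show "hermitian (a n)" for n
      using v(1) by (simp add: a_def hermitian_scaleQ hermitian_sqrt_partial_sum)
    show "order_cauchy a"
      unfolding a_def using order_cauchy_sqrt_partial_sum[OF v] by (rule order_cauchy_scaleQ)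
    have "order_null
        (\<lambda>n. scaleQ (- (K * K)) (sqrt_partial_sum v n * sqrt_partial_sum v n - (1 + v)))"
      using order_null_sqrt_partial_sum_square[OF v] by (rule order_null_scaleQ)
    then show "order_null (\<lambda>n. x - a n * a n)"
      by (simp add: x_eq a_def scaleQ_diff_right mult_scaleQ_left mult_scaleQ_right scaleQ_scaleQ
          scaleQ_minus_left)
  qed (rule assms(2))
qed

theorem proposition2p8:
  fixes x :: "'a::star_algebra"
  assumes "archimedean_star TYPE('a)"
    and "invol x = x"
  shows "cs_pos (cs_of x) \<longleftrightarrow> (\<forall>\<alpha>::rat. \<alpha> > 0 \<longrightarrow> x + ratA \<alpha> \<in> posCone)"
  using nonneg_if_cs_pos[OF assms(2)] cs_pos_if_nonneg[OF assms] by blast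

end
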